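(* Let $\omega_p\in(-\pi,\pi)\setminus\{0\}$ and let $f_c(z)=\frac{\alpha_cz^2+\beta_cz+1}{z^2+\beta_cz+\alpha_c}$ with real $\alpha_c,\beta_c$ such that $f_c$ is stable with a pair of non-real complex-conjugate poles (equivalently $0<\alpha_c<1$ and $\beta_c^2<4\alpha_c$). Then there exist real $\alpha_r,\beta_r$ such that $f_r(z)=\frac{\alpha_rz^2+\beta_rz+1}{z^2+\beta_rz+\alpha_r}$ is stable with two real poles (equivalently $|\alpha_r|<1$, $|\beta_r|<\alpha_r+1$, $\beta_r^2\ge4\alpha_r$), and $$\theta_{f_c}(\omega_p)=\theta_{f_r}(\omega_p)\ (\mathrm{mod}\ 2\pi)\quad\text{and}\quad\theta_{f_c}'(\omega_p)<\theta_{f_r}'(\omega_p).$$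
   Context: Stable means all poles in the open unit disk; such $f_c,f_r$ are all-pass with $|f(e^{j\omega})|=1$ for all $\omega$. $\theta_f(\omega):=\angle f(e^{j\omega})$ is a continuous choice of argument and $\theta_f'(\omega)$ its derivative with respect to $\omega$. *)

theory Defs
  imports "HOL-Analysis.Analysis"
begin

definition allpass2 :: "real \<Rightarrow> real \<Rightarrow> complex \<Rightarrow> complex" where
  "allpass2 a b z = (of_real a * z^2 + of_real b * z + 1) / (z^2 + of_real b * z + of_real a)"

definition poles2 :: "real \<Rightarrow> real \<Rightarrow> complex set" where
  "poles2 a b = {z. z^2 + of_real b * z + of_real a = 0}"

definition stable2 :: "real \<Rightarrow> real \<Rightarrow> bool" where
  "stable2 a b \<longleftrightarrow> (\<forall>z\<in>poles2 a b. norm z < 1)"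

definition nonreal_poles2 :: "real \<Rightarrow> real \<Rightarrow> bool" where
  "nonreal_poles2 a b \<longleftrightarrow> (\<forall>z\<in>poles2 a b. Im z \<noteq> 0)"

definition real_poles2 :: "real \<Rightarrow> real \<Rightarrow> bool" where
  "real_poles2 a b \<longleftrightarrow> (\<forall>z\<in>poles2 a b. Im z = 0)"

definition cont_arg :: "(complex \<Rightarrow> complex) \<Rightarrow> (real \<Rightarrow> real) \<Rightarrow> bool" where
  "cont_arg f \<theta> \<longleftrightarrow> continuous_on UNIV \<theta> \<and>
     (\<forall>\<omega>. f (cis \<omega>) = of_real (norm (f (cis \<omega>))) * cis (\<theta> \<omega>))"

end

theory Submission
  imports Defs
begin

text \<open>Both all-pass sections have unimodular frequency response \<open>cnj E / E\<close> on the unit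
  circle, with \<open>E\<close> an explicit trigonometric factor, so their phase derivatives are
  \<open>-2 Im (E' / E)\<close>. Scaling the parameters as
  \<open>\<alpha> = 1 - \<mu> (1 - \<alpha>\<^sub>c)\<close>, \<open>\<beta> = \<mu> (2 cos \<omega>\<^sub>p + \<beta>\<^sub>c) - 2 cos \<omega>\<^sub>p\<close>
  multiplies \<open>E(\<omega>\<^sub>p)\<close> by \<open>\<mu> > 0\<close>, so the phase at \<open>\<omega>\<^sub>p\<close> is unchanged, while
  the phase derivative grows by \<open>4 (\<mu> - 1) (1 - \<alpha>\<^sub>c) sin\<^sup>2 \<omega>\<^sub>p / (\<mu> |E(\<omega>\<^sub>p)|\<^sup>2)\<close>.
  The discriminant \<open>\<beta>\<^sup>2 - 4 \<alpha>\<close> is negative for \<open>\<mu> = 1\<close>; at its larger root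
  \<open>\<mu> > 1\<close> the scaled section has a stable double real pole.\<close>

lemma continuous_arg_has_real_derivative:
  fixes g :: "real \<Rightarrow> complex" and \<theta> :: "real \<Rightarrow> real"
  assumes cont: "continuous_on UNIV \<theta>"
    and polar: "\<And>x. g x = of_real (norm (g x)) * cis (\<theta> x)"
    and nz: "\<And>x. g x \<noteq> 0"
    and D: "(g has_vector_derivative g') (at w)"
  shows "(\<theta> has_real_derivative Im (g' / g w)) (at w)"
proof -
  define S where "S = \<theta> -` {\<theta> w - pi <..< \<theta> w + pi}"
  have S_open: "open S" unfolding S_def
    using continuous_on_open_vimage[of UNIV \<theta>] cont by auto
  have w_in_S: "w \<in> S" unfolding S_def by simp
  \<comment> \<open>on \<open>S\<close> the continuous argument differs from \<open>\<theta> w\<close> by the principal argument\<close>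
  have local_lift: "\<theta> w + Im (Ln (g x / g w)) = \<theta> x" if "x \<in> S" for x
  proof -
    have r: "norm (g x) / norm (g w) > 0" using nz by simp
    have "g x / g w = rcis (norm (g x) / norm (g w)) (\<theta> x - \<theta> w)"
      apply (subst polar[of x], subst polar[of w])
      using nz[of w] by (simp add: rcis_def cis_divide[symmetric] field_simps)
    then have "Arg (g x / g w) = \<theta> x - \<theta> w"
      using that r by (intro Arg_unique') (auto simp: S_def)
    then show ?thesis using nz by (simp add: Arg_eq_Im_Ln)
  qed
  have "((\<lambda>x. \<theta> w + Im (Ln (g x / g w))) has_real_derivative Im (g' / g w)) (at w)"
  proof -
    have D1: "((\<lambda>x. g x / g w) has_vector_derivative (g' / g w)) (at w)"
      using D by (auto intro!: derivative_eq_intros)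
    have "(Ln has_field_derivative 1) (at ((\<lambda>x. g x / g w) w))"
      using nz[of w] has_field_derivative_Ln[of 1] by (simp add: complex_nonpos_Reals_iff)
    from field_vector_diff_chain_at[OF D1 this]
    have "((\<lambda>x. Ln (g x / g w)) has_vector_derivative g' / g w) (at w)"
      by (simp add: o_def)
    then show ?thesis
      using DERIV_add[OF DERIV_const[of "\<theta> w"] has_field_derivative_Im] by simp
  qed
  then show ?thesis
    by (rule has_field_derivative_transform_within_open[OF _ S_open w_in_S local_lift])
qed

lemma conj_quotient_has_vector_derivative:
  fixes E :: "real \<Rightarrow> complex"
  assumes "(E has_vector_derivative E') (at w)" "E w \<noteq> 0"
  shows "((\<lambda>x. cnj (E x) / E x) has_vector_derivative
           (cnj E' * E w - cnj (E w) * E') / (E w)\<^sup>2) (at w)"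
  using assms unfolding has_vector_derivative_def
  by (auto intro!: derivative_eq_intros
      simp: has_vector_derivative_def fun_eq_iff scaleR_conv_of_real field_simps power2_eq_square)

lemma Im_log_derivative_conj_quotient:
  fixes E E' :: complex
  assumes "E \<noteq> 0"
  shows "Im ((cnj E' * E - cnj E * E') / E\<^sup>2 / (cnj E / E)) = - 2 * Im (E' / E)"
proof -
  have "(cnj E' * E - cnj E * E') / E\<^sup>2 / (cnj E / E) = cnj (E' / E) - E' / E"
    using assms by (simp add: field_simps power2_eq_square)
  then show ?thesis by (simp del: complex_cnj_divide)
qed

lemma continuous_arg_conj_quotient_has_real_derivative:
  fixes E :: "real \<Rightarrow> complex" and \<theta> :: "real \<Rightarrow> real"
  assumes cont: "continuous_on UNIV \<theta>"
    and arg: "\<And>x. cnj (E x) / E x = cis (\<theta> x)"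
    and nz: "\<And>x. E x \<noteq> 0"
    and D: "(E has_vector_derivative E') (at w)"
  shows "(\<theta> has_real_derivative - 2 * Im (E' / E w)) (at w)"
proof -
  have polar: "cnj (E x) / E x = of_real (norm (cnj (E x) / E x)) * cis (\<theta> x)" for x
    using arg[of x] by simp
  have nzq: "cnj (E x) / E x \<noteq> 0" for x
    using nz[of x] by simp
  from continuous_arg_has_real_derivative
    [OF cont polar nzq conj_quotient_has_vector_derivative[OF D nz]]
  show ?thesis
    unfolding Im_log_derivative_conj_quotient[OF nz] .
qed

lemma cis_eq_imp_diff_2pi:
  assumes "cis x = cis y" shows "\<exists>k::int. x = y + 2 * pi * of_int k"
  using assms sin_cos_eq_iff[of x y] by (auto simp: complex_eq_iff)

lemma Im_scaled_shifted_quotient: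
  fixes F F' :: complex and l r :: real
  assumes "l \<noteq> 0" "F \<noteq> 0"
  shows "Im ((of_real l * F' + of_real r) / (of_real l * F))
           = Im (F' / F) - r * Im F / (l * (norm F)\<^sup>2)"
proof -
  have "(of_real l * F' + of_real r) / (of_real l * F) = F' / F + of_real (r / l) * inverse F"
    using assms by (simp add: field_simps)
  also have "Im \<dots> = Im (F' / F) - r / l * (Im F / (norm F)\<^sup>2)"
    by (simp add: cmod_power2)
  finally show ?thesis
    by simp
qed

text \<open>On the unit circle the denominator of \<open>allpass2 a b\<close> is \<open>cis w\<close> times this factor and
  the numerator is \<open>cis w\<close> times its conjugate.\<close>
definition allpass2_factor :: "real \<Rightarrow> real \<Rightarrow> real \<Rightarrow> complex" where
  "allpass2_factor a b w = Complex ((1 + a) * cos w + b) ((1 - a) * sin w)"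

lemma allpass2_denominator_cis:
  "(cis w)\<^sup>2 + of_real b * cis w + of_real a = cis w * allpass2_factor a b w"
  by (simp add: allpass2_factor_def complex_eq_iff power2_eq_square algebra_simps
      sin_squared_eq[of w, unfolded power2_eq_square])

lemma allpass2_numerator_cis:
  "of_real a * (cis w)\<^sup>2 + of_real b * cis w + 1 = cis w * cnj (allpass2_factor a b w)"
  by (simp add: allpass2_factor_def complex_eq_iff power2_eq_square algebra_simps
      sin_squared_eq[of w, unfolded power2_eq_square])

lemma stable2_allpass2_factor_nonzero:
  assumes "stable2 a b"
  shows "allpass2_factor a b w \<noteq> 0"
proof
  assume "allpass2_factor a b w = 0"
  then have "cis w \<in> poles2 a b" by (simp add: poles2_def allpass2_denominator_cis)
  then show False using assms by (auto simp: stable2_def)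
qed

lemma stable2_allpass2_cis:
  assumes "stable2 a b"
  shows "allpass2 a b (cis w) = cnj (allpass2_factor a b w) / allpass2_factor a b w"
  using stable2_allpass2_factor_nonzero[OF assms]
  by (simp add: allpass2_def allpass2_denominator_cis allpass2_numerator_cis)

definition allpass2_factor_deriv :: "real \<Rightarrow> real \<Rightarrow> complex" where
  "allpass2_factor_deriv a w = Complex (- (1 + a) * sin w) ((1 - a) * cos w)"

lemma allpass2_factor_has_vector_derivative:
  "(allpass2_factor a b has_vector_derivative allpass2_factor_deriv a w) (at w)"
  unfolding has_vector_derivative_complex_iff allpass2_factor_def allpass2_factor_deriv_def
  by (auto intro!: derivative_eq_intros simp: algebra_simps)

lemma cont_arg_allpass2_cis:
  assumes "stable2 a b" "cont_arg (allpass2 a b) \<theta>"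
  shows "cis (\<theta> w) = cnj (allpass2_factor a b w) / allpass2_factor a b w"
  using assms stable2_allpass2_factor_nonzero[OF assms(1)]
  by (auto simp: cont_arg_def stable2_allpass2_cis norm_divide)

lemma cont_arg_allpass2_has_real_derivative:
  assumes "stable2 a b" "cont_arg (allpass2 a b) \<theta>"
  shows "(\<theta> has_real_derivative
           - 2 * Im (allpass2_factor_deriv a w / allpass2_factor a b w)) (at w)"
  using assms(2) cont_arg_allpass2_cis[OF assms]
  by (intro continuous_arg_conj_quotient_has_real_derivative
      stable2_allpass2_factor_nonzero[OF assms(1)] allpass2_factor_has_vector_derivative)
    (auto simp: cont_arg_def)

lemma allpass2_factor_scaled:
  "allpass2_factor (1 - \<mu> * (1 - a)) (\<mu> * (2 * cos w + b) - 2 * cos w) w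
     = of_real \<mu> * allpass2_factor a b w"
  by (simp add: allpass2_factor_def complex_eq_iff algebra_simps)

lemma cont_arg_allpass2_scaled:
  fixes \<mu> a b w :: real
  defines "a' \<equiv> 1 - \<mu> * (1 - a)" and "b' \<equiv> \<mu> * (2 * cos w + b) - 2 * cos w"
    and "F \<equiv> allpass2_factor a b w"
  assumes "\<mu> > 0" "stable2 a b" "stable2 a' b'"
    and \<theta>: "cont_arg (allpass2 a b) \<theta>" and \<theta>': "cont_arg (allpass2 a' b') \<theta>'"
  shows "cis (\<theta>' w) = cis (\<theta> w)"
    and "deriv \<theta>' w = deriv \<theta> w + 4 * (\<mu> - 1) * sin w * Im F / (\<mu> * (norm F)\<^sup>2)"
proof -
  have F': "allpass2_factor a' b' w = of_real \<mu> * F"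
    unfolding a'_def b'_def F_def by (rule allpass2_factor_scaled)
  have F_nz: "F \<noteq> 0" unfolding F_def by (rule stable2_allpass2_factor_nonzero) fact
  have \<mu>_nz: "\<mu> \<noteq> 0" using \<open>\<mu> > 0\<close> by simp
  show "cis (\<theta>' w) = cis (\<theta> w)"
    using cont_arg_allpass2_cis[OF \<open>stable2 a' b'\<close> \<theta>', of w]
      cont_arg_allpass2_cis[OF \<open>stable2 a b\<close> \<theta>, of w] \<open>\<mu> > 0\<close>
    unfolding F' F_def by simp
  have deriv_scaled: "allpass2_factor_deriv a' w
      = of_real \<mu> * allpass2_factor_deriv a w + of_real (2 * (\<mu> - 1) * sin w)"
    unfolding a'_def allpass2_factor_deriv_def by (simp add: complex_eq_iff algebra_simps)
  have "- 2 * Im (allpass2_factor_deriv a' w / allpass2_factor a' b' w)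
      = - 2 * Im (allpass2_factor_deriv a w / F) + 4 * (\<mu> - 1) * sin w * Im F / (\<mu> * (norm F)\<^sup>2)"
    unfolding deriv_scaled F' Im_scaled_shifted_quotient[OF \<mu>_nz F_nz]
    by (simp add: algebra_simps minus_divide_left)
  then show "deriv \<theta>' w = deriv \<theta> w + 4 * (\<mu> - 1) * sin w * Im F / (\<mu> * (norm F)\<^sup>2)"
    using DERIV_imp_deriv[OF cont_arg_allpass2_has_real_derivative[OF \<open>stable2 a' b'\<close> \<theta>']]
      DERIV_imp_deriv[OF cont_arg_allpass2_has_real_derivative[OF \<open>stable2 a b\<close> \<theta>]]
    unfolding F_def by simp
qed

lemma cont_arg_allpass2_scaled_deriv_less:
  fixes \<mu> a b w :: real
  defines "a' \<equiv> 1 - \<mu> * (1 - a)" and "b' \<equiv> \<mu> * (2 * cos w + b) - 2 * cos w"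
  assumes "\<mu> > 1" "a < 1" "sin w \<noteq> 0" "stable2 a b" "stable2 a' b'"
    and "cont_arg (allpass2 a b) \<theta>" "cont_arg (allpass2 a' b') \<theta>'"
  shows "deriv \<theta> w < deriv \<theta>' w"
proof -
  let ?F = "allpass2_factor a b w"
  have "sin w * Im ?F = (1 - a) * (sin w)\<^sup>2"
    by (simp add: allpass2_factor_def power2_eq_square)
  then have "sin w * Im ?F > 0"
    using assms by simp
  moreover have "?F \<noteq> 0" by (rule stable2_allpass2_factor_nonzero) fact
  ultimately have "4 * (\<mu> - 1) * sin w * Im ?F / (\<mu> * (norm ?F)\<^sup>2) > 0"
    using \<open>\<mu> > 1\<close> by (simp add: mult.assoc)
  then show ?thesis
    using cont_arg_allpass2_scaled(2)[of \<mu> a b w \<theta> \<theta>'] assms by simp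
qed

lemma nonreal_poles2_discriminant_neg:
  assumes "nonreal_poles2 a b"
  shows "b\<^sup>2 < 4 * a"
proof (rule ccontr)
  assume "\<not> ?thesis"
  then have ge: "b\<^sup>2 - 4 * a \<ge> 0" by simp
  define r where "r = (- b + sqrt (b\<^sup>2 - 4 * a)) / 2"
  have "r\<^sup>2 + b * r + a = 0"
    unfolding r_def using real_sqrt_pow2[OF ge] by (simp add: power2_eq_square field_simps)
  then have "(of_real r :: complex)\<^sup>2 + of_real b * of_real r + of_real a = 0"
    by (metis of_real_0 of_real_add of_real_mult of_real_power)
  then have "of_real r \<in> poles2 a b" by (simp add: poles2_def)
  then show False using assms by (auto simp: nonreal_poles2_def)
qed

lemma stable2_discriminant_neg_less_one:
  assumes "stable2 a b" "b\<^sup>2 < 4 * a"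
  shows "a < 1"
proof -
  have ge: "4 * a - b\<^sup>2 \<ge> 0" using assms(2) by simp
  define z where "z = Complex (- b / 2) (sqrt (4 * a - b\<^sup>2) / 2)"
  have "z\<^sup>2 + of_real b * z + of_real a = 0"
    unfolding z_def using real_sqrt_pow2[OF ge]
    by (simp add: complex_eq_iff power2_eq_square field_simps)
  then have "norm z < 1" using assms(1) by (auto simp: stable2_def poles2_def)
  moreover have "(norm z)\<^sup>2 = a"
    unfolding z_def cmod_power2 using real_sqrt_pow2[OF ge] by (simp add: power2_eq_square field_simps)
  ultimately show ?thesis
    by (metis abs_norm_cancel abs_square_less_1)
qed

lemma poles2_double:
  assumes "b\<^sup>2 = 4 * a"
  shows "poles2 a b = {- of_real b / 2}"
proof -
  have "z\<^sup>2 + of_real b * z + of_real a = (z + of_real b / 2)\<^sup>2" for z :: complex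
  proof -
    have "a = (b / 2)\<^sup>2"
      using assms by (simp add: power_divide)
    then have "(of_real a :: complex) = (of_real b / 2)\<^sup>2"
      by simp
    then show ?thesis by (simp add: power2_eq_square algebra_simps)
  qed
  then show ?thesis by (auto simp: poles2_def eq_neg_iff_add_eq_0)
qed

lemma stable2_real_poles2_double:
  assumes "b\<^sup>2 = 4 * a" "a < 1"
  shows "stable2 a b" and "real_poles2 a b"
proof -
  have "\<bar>b\<bar>\<^sup>2 < 2\<^sup>2" using assms by simp
  then have "\<bar>b\<bar> < 2" by (rule power_less_imp_less_base) simp
  then show "stable2 a b"
    by (simp add: stable2_def poles2_double[OF assms(1)] norm_divide)
  show "real_poles2 a b"
    by (simp add: real_poles2_def poles2_double[OF assms(1)])
qed

lemma double_pole_scaling_exists: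
  fixes c \<alpha> \<beta> :: real
  assumes c: "c\<^sup>2 < 1" and disc: "\<beta>\<^sup>2 < 4 * \<alpha>" and \<alpha>: "\<alpha> < 1"
  shows "\<exists>\<mu>>1. (\<mu> * (2 * c + \<beta>) - 2 * c)\<^sup>2 = 4 * (1 - \<mu> * (1 - \<alpha>))"
proof -
  define s2 where "s2 = 1 - c\<^sup>2"
  define K where "K = 2 * c + \<beta>"
  define m where "m = 1 - \<alpha> - c * K"
  define R where "R = sqrt (m\<^sup>2 + K\<^sup>2 * s2)"
  have s2: "s2 > 0" using c by (simp add: s2_def)
  have R: "R \<ge> 0" "R\<^sup>2 = m\<^sup>2 + K\<^sup>2 * s2"
    using s2 by (simp_all add: R_def)
  have K_bound: "K\<^sup>2 < 4 * s2 - 4 * m"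
    using disc by (simp add: K_def m_def s2_def power2_eq_square algebra_simps)
  have mR: "m + R > 0"
  proof (rule ccontr)
    assume "\<not> m + R > 0"
    then have "R\<^sup>2 \<le> (- m)\<^sup>2" using R by (intro power_mono) auto
    then have "R\<^sup>2 \<le> m\<^sup>2" by simp
    then have "K = 0" using R s2 by (simp add: mult_le_0_iff)
    then show False using \<open>\<not> m + R > 0\<close> R \<alpha> by (simp add: m_def)
  qed
  \<comment> \<open>the larger root of \<open>K\<^sup>2 \<mu>\<^sup>2 + 4 m \<mu> - 4 s2\<close>, in a form that stays valid for \<open>K = 0\<close>\<close>
  define \<mu> where "\<mu> = 2 * s2 / (m + R)"
  have "R\<^sup>2 < (2 * s2 - m)\<^sup>2"
    using mult_strict_right_mono[OF K_bound s2] R by (simp add: power2_eq_square algebra_simps)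
  moreover have "2 * s2 - m > 0" using K_bound s2 by (smt (verit) zero_le_power2)
  ultimately have "R < 2 * s2 - m" using R by (smt (verit) power_mono)
  then have "\<mu> > 1" using mR by (simp add: \<mu>_def)
  moreover have "(\<mu> * K - 2 * c)\<^sup>2 = 4 * (1 - \<mu> * (1 - \<alpha>))"
  proof -
    have \<mu>_mR: "\<mu> * (m + R) = 2 * s2" using mR by (simp add: \<mu>_def)
    then have "\<mu> * K\<^sup>2 * (m + R) = 2 * (R - m) * (m + R)"
      using R by (simp add: algebra_simps power2_eq_square)
    then have \<mu>K: "\<mu> * K\<^sup>2 = 2 * (R - m)" using mR by simp
    have "(\<mu> * K - 2 * c)\<^sup>2 - 4 * (1 - \<mu> * (1 - \<alpha>)) = \<mu> * (\<mu> * K\<^sup>2 + 4 * m) - 4 * s2"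
      by (simp add: m_def s2_def power2_eq_square algebra_simps)
    also have "\<dots> = 2 * (\<mu> * (m + R)) - 4 * s2"
      unfolding \<mu>K by (simp add: algebra_simps)
    also have "\<dots> = 0"
      unfolding \<mu>_mR by simp
    finally show ?thesis by simp
  qed
  ultimately show ?thesis unfolding K_def by blast
qed

lemma stable2_double_pole_scaling_exists:
  fixes \<alpha> \<beta> w :: real
  assumes "stable2 \<alpha> \<beta>" "nonreal_poles2 \<alpha> \<beta>" "sin w \<noteq> 0"
  shows "\<exists>\<mu>>1. stable2 (1 - \<mu> * (1 - \<alpha>)) (\<mu> * (2 * cos w + \<beta>) - 2 * cos w) \<and>
                real_poles2 (1 - \<mu> * (1 - \<alpha>)) (\<mu> * (2 * cos w + \<beta>) - 2 * cos w)"
proof -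
  have disc: "\<beta>\<^sup>2 < 4 * \<alpha>" by (rule nonreal_poles2_discriminant_neg) fact
  have \<alpha>: "\<alpha> < 1" by (rule stable2_discriminant_neg_less_one) fact+
  have "(cos w)\<^sup>2 < 1" using assms(3) sin_cos_squared_add[of w] by (smt (verit) zero_less_power2)
  then obtain \<mu> where "\<mu> > 1"
    and double: "(\<mu> * (2 * cos w + \<beta>) - 2 * cos w)\<^sup>2 = 4 * (1 - \<mu> * (1 - \<alpha>))"
    using double_pole_scaling_exists[OF _ disc \<alpha>] by blast
  moreover have "1 - \<mu> * (1 - \<alpha>) < 1" using \<open>\<mu> > 1\<close> \<alpha> by simp
  ultimately show ?thesis
    using stable2_real_poles2_double[OF double] by blast
qed

theorem lemma4:
  fixes \<omega>p \<alpha>c \<beta>c :: real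
  assumes "-pi < \<omega>p" "\<omega>p < pi" "\<omega>p \<noteq> 0"
    and "stable2 \<alpha>c \<beta>c" "nonreal_poles2 \<alpha>c \<beta>c"
  shows "\<exists>\<alpha>r \<beta>r :: real. stable2 \<alpha>r \<beta>r \<and> real_poles2 \<alpha>r \<beta>r \<and>
     (\<forall>\<theta>c \<theta>r. cont_arg (allpass2 \<alpha>c \<beta>c) \<theta>c \<and> cont_arg (allpass2 \<alpha>r \<beta>r) \<theta>r \<longrightarrow>
        (\<exists>k::int. \<theta>c \<omega>p = \<theta>r \<omega>p + 2 * pi * of_int k) \<and>
        \<theta>c differentiable (at \<omega>p) \<and> \<theta>r differentiable (at \<omega>p) \<and>
        deriv \<theta>c \<omega>p < deriv \<theta>r \<omega>p)"
proof -
  have sin: "sin \<omega>p \<noteq> 0" using sin_eq_0_pi assms(1-3) by blast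
  have \<alpha>c: "\<alpha>c < 1"
    using stable2_discriminant_neg_less_one nonreal_poles2_discriminant_neg assms(4,5) by blast
  obtain \<mu> where "\<mu> > 1"
    and scaled: "stable2 (1 - \<mu> * (1 - \<alpha>c)) (\<mu> * (2 * cos \<omega>p + \<beta>c) - 2 * cos \<omega>p) \<and>
      real_poles2 (1 - \<mu> * (1 - \<alpha>c)) (\<mu> * (2 * cos \<omega>p + \<beta>c) - 2 * cos \<omega>p)"
    using stable2_double_pole_scaling_exists[OF assms(4,5) sin] by blast
  define \<alpha>r where "\<alpha>r = 1 - \<mu> * (1 - \<alpha>c)"
  define \<beta>r where "\<beta>r = \<mu> * (2 * cos \<omega>p + \<beta>c) - 2 * cos \<omega>p"
  have st: "stable2 \<alpha>r \<beta>r" and real: "real_poles2 \<alpha>r \<beta>r"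
    using scaled by (simp_all add: \<alpha>r_def \<beta>r_def)
  show ?thesis
  proof (rule exI[of _ \<alpha>r], rule exI[of _ \<beta>r], intro conjI st real allI impI)
    fix \<theta>c \<theta>r
    assume "cont_arg (allpass2 \<alpha>c \<beta>c) \<theta>c \<and> cont_arg (allpass2 \<alpha>r \<beta>r) \<theta>r"
    then have \<theta>c: "cont_arg (allpass2 \<alpha>c \<beta>c) \<theta>c" and \<theta>r: "cont_arg (allpass2 \<alpha>r \<beta>r) \<theta>r"
      by blast+
    have "cis (\<theta>r \<omega>p) = cis (\<theta>c \<omega>p)"
      using cont_arg_allpass2_scaled(1)[where \<mu> = \<mu> and a = \<alpha>c and b = \<beta>c and w = \<omega>p,
          folded \<alpha>r_def \<beta>r_def, OF _ assms(4) st \<theta>c \<theta>r]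
        \<open>\<mu> > 1\<close> by simp
    then show "\<exists>k::int. \<theta>c \<omega>p = \<theta>r \<omega>p + 2 * pi * of_int k"
      by (intro cis_eq_imp_diff_2pi) simp
    show "\<theta>c differentiable (at \<omega>p)" "\<theta>r differentiable (at \<omega>p)"
      using cont_arg_allpass2_has_real_derivative[OF assms(4) \<theta>c]
        cont_arg_allpass2_has_real_derivative[OF st \<theta>r] real_differentiable_def by blast+
    show "deriv \<theta>c \<omega>p < deriv \<theta>r \<omega>p"
      using cont_arg_allpass2_scaled_deriv_less[where \<mu> = \<mu> and a = \<alpha>c and b = \<beta>c and w = \<omega>p,
          folded \<alpha>r_def \<beta>r_def, OF \<open>\<mu> > 1\<close> \<alpha>c sin assms(4) st \<theta>c \<theta>r] .
  qed
qed

end
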